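(* Let $\mathcal D$ be a set and $x,y\in\mathcal D$, viewed as one-vertex decorated trees in the (completed) Grossman--Larson algebra $GL$. Then $$ \exp(x)\ast\exp(y)=\exp\big(y+\{x;\exp(y)\}\big), $$ where $\exp$ denotes the exponential with respect to the commutative product of $GL$, $\ast$ is the Grossman--Larson product, and $\{x;\exp(y)\}:=x\curvearrowleft\exp(y)=\sum_{n\ge0}\frac{1}{n!}\,x\curvearrowleft y^n$.
   Context: $k$ is a field of characteristic zero. $\mathcal T$ is the span of $\mathcal D$-decorated rooted trees; for trees $t,t'$, $t\curvearrowleft t'$ is the sum over vertices $v$ of $t$ of the tree obtained by joining $v$ to the root of $t'$ by a new edge. $GL=S(\mathcal T)$ is the span of forests (commutative monomials in trees, commutative product written as juxtaposition, unit the empty forest $e$). Forests act on trees by $t\curvearrowleft e=t$, $t\curvearrowleft(t_1\cdots t_n)=(t\curvearrowleft(t_1\cdots t_{n-1}))\curvearrowleft t_n-\sum_{i=1}^{n-1}t\curvearrowleft(t_1\cdots(t_i\curvearrowleft t_n)\cdots t_{n-1})$. The Grossman--Larson product is $(t_1\cdots t_n)\ast(t'_1\cdots t'_m)=\sum_f F_0(t_1\curvearrowleft F_1)\cdots(t_n\curvearrowleft F_n)$ over all maps $f:\{1..m\}\to\{0..n\}$, $F_i=\prod_{j\in f^{-1}(i)}t'_j$ (empty product $e$), with unit $e$. All products respect the grading by total number of vertices, and the exponentials $\exp(z)=\sum_{n\ge0}z^n/n!$ (commutative powers) are taken in the completion of $GL$ with respect to this grading. *)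

theory Defs
  imports "HOL-Library.Multiset" "HOL-Library.FuncSet"
begin

text \<open>A forest is a multiset of trees
  (commutative monomial; the empty multiset is the empty forest e).\<close>

datatype 'd dtree = Node 'd "'d dtree multiset"

type_synonym 'd forest = "'d dtree multiset"

text \<open>Elements of the span of trees / of GL (and of their completions) are represented
  by coefficient functions.\<close>

type_synonym ('d,'k) tcomb = "'d dtree \<Rightarrow> 'k"
type_synonym ('d,'k) fcomb = "'d forest \<Rightarrow> 'k"

text \<open>Only finitely many terms are nonzero in all
  uses below, so this is the ordinary (formal) sum.\<close>

definition lin :: "('a \<Rightarrow> 'b \<Rightarrow> 'k::comm_ring_1) \<Rightarrow> ('a \<Rightarrow> 'k) \<Rightarrow> 'b \<Rightarrow> 'k" where
  "lin T c b = (\<Sum>a\<in>{a. c a \<noteq> 0 \<and> T a b \<noteq> 0}. c a * T a b)"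

definition single :: "'a \<Rightarrow> 'a \<Rightarrow> 'k::comm_ring_1" where
  "single a = (\<lambda>b. if b = a then 1 else 0)"

text \<open>graft t s = t \<curvearrowleft> s: the sum over the vertices v of t of the tree obtained by
  joining v to the root of s by a new edge (as a multiset of trees = sum with
  nonnegative integer coefficients).\<close>

function graft :: "'d dtree \<Rightarrow> 'd dtree \<Rightarrow> 'd dtree multiset" where
  "graft (Node d cs) s =
     {# Node d (add_mset s cs) #} +
     (\<Sum>\<^sub># (image_mset (\<lambda>c. image_mset (\<lambda>c'. Node d (add_mset c' (cs - {#c#}))) (graft c s)) cs))"
  by pat_completeness auto
termination
  by (relation "measure (\<lambda>(t, s). size t)") (auto simp: size_multiset_overloaded_eq dest!: multi_member_split)

text \<open>act_r t rs with rs = [t_n, ..., t_1] (the list of the forest t_1...t_n written in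
  reverse order, so that the last factor t_n is the head) is t \<curvearrowleft> (t_1 ... t_n), given by
  the recursion
  t \<curvearrowleft> e = t,
  t \<curvearrowleft> (t_1...t_n) = (t \<curvearrowleft> (t_1...t_{n-1})) \<curvearrowleft> t_n
       - sum_{i<n} t \<curvearrowleft> (t_1...(t_i \<curvearrowleft> t_n)...t_{n-1}),
  everything extended linearly.\<close>

definition graft_lin :: "('d,'k::comm_ring_1) tcomb \<Rightarrow> 'd dtree \<Rightarrow> ('d,'k) tcomb" where
  "graft_lin c s = lin (\<lambda>w u. of_nat (count (graft w s) u)) c"

function act_r :: "'d dtree \<Rightarrow> 'd dtree list \<Rightarrow> ('d,'k::comm_ring_1) tcomb" where
  "act_r t [] = single t"
| "act_r t (s # rs) = (\<lambda>u. graft_lin (act_r t rs) s u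
      - (\<Sum>i<length rs. \<Sum>v\<in>set_mset (graft (rs ! i) s).
            of_nat (count (graft (rs ! i) s) v) * act_r t (rs[i := v]) u))"
  by pat_completeness auto
termination
  by (relation "measure (\<lambda>(t, rs). length rs)") auto

text \<open>t \<curvearrowleft> F for a forest F (the paper's definition, via any ordering of the
  factors of F).\<close>

definition act :: "'d dtree \<Rightarrow> 'd forest \<Rightarrow> ('d,'k::comm_ring_1) tcomb" where
  "act t F = act_r t (rev (SOME xs. mset xs = F))"

definition act_lin :: "'d dtree \<Rightarrow> ('d,'k::comm_ring_1) fcomb \<Rightarrow> ('d,'k) tcomb" where
  "act_lin t c = lin (act t) c"

definition fmult :: "('d,'k::comm_ring_1) fcomb \<Rightarrow> ('d,'k) fcomb \<Rightarrow> ('d,'k) fcomb" where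
  "fmult a b F = (\<Sum>G\<in>{G. G \<subseteq># F}. a G * b (F - G))"

definition funit :: "('d,'k::comm_ring_1) fcomb" where
  "funit = single {#}"

primrec fpow :: "('d,'k::comm_ring_1) fcomb \<Rightarrow> nat \<Rightarrow> ('d,'k) fcomb" where
  "fpow z 0 = funit"
| "fpow z (Suc n) = fmult z (fpow z n)"

definition fprod :: "('d,'k::comm_ring_1) fcomb list \<Rightarrow> ('d,'k) fcomb" where
  "fprod xs = foldr fmult xs funit"

text \<open>exp(z) = sum_n z^n / n! (formal sum; for z without constant term only finitely
  many summands contribute to each coefficient).\<close>

definition fexp :: "('d,'k::field_char_0) fcomb \<Rightarrow> ('d,'k) fcomb" where
  "fexp z F = (\<Sum>n\<in>{n. fpow z n F \<noteq> 0}. fpow z n F / fact n)"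

definition tree_emb :: "('d,'k::comm_ring_1) tcomb \<Rightarrow> ('d,'k) fcomb" where
  "tree_emb c = lin (\<lambda>t. single {#t#}) c"

text \<open>On forests (t_1...t_n) * (t'_1...t'_m) = sum over f: {1..m} -> {0..n} of
  F_0 (t_1 \<curvearrowleft> F_1)...(t_n \<curvearrowleft> F_n); here indices are shifted to start at 0:
  ts ! i is t_{i+1}, ss ! j is t'_{j+1}, and f j = Suc i means t'_{j+1} goes to t_{i+1}.\<close>

definition gl_basis :: "'d forest \<Rightarrow> 'd forest \<Rightarrow> ('d,'k::comm_ring_1) fcomb" where
  "gl_basis F G = (let ts = (SOME xs. mset xs = F); ss = (SOME xs. mset xs = G);
       n = length ts; m = length ss in
     (\<lambda>H. \<Sum>f\<in>{..<m} \<rightarrow>\<^sub>E {..n}.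
        fmult (single (image_mset (nth ss) (mset_set {j\<in>{..<m}. f j = 0})))
              (fprod (map (\<lambda>i. tree_emb (act (ts ! i) (image_mset (nth ss) (mset_set {j\<in>{..<m}. f j = Suc i}))))
                          [0..<n])) H))"

definition gl :: "('d,'k::comm_ring_1) fcomb \<Rightarrow> ('d,'k) fcomb \<Rightarrow> ('d,'k) fcomb" where
  "gl a b H = (\<Sum>(F,G)\<in>{(F,G). a F \<noteq> 0 \<and> b G \<noteq> 0 \<and> (gl_basis F G H :: 'k) \<noteq> 0}.
                 a F * b G * gl_basis F G H)"

definition leaf :: "'d \<Rightarrow> 'd dtree" where
  "leaf d = Node d {#}"

end

theory Submission
  imports Defs
begin

text \<open>Both exponentials are built from powers of single leaves, and a leaf x acts on a
  forest F by grafting all of F onto its root: x \<curvearrowleft> F = x(F).  Hence x^n * y^m is a sum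
  of forests made of leaves y and corollas x(y^k), and the multiplicity of a forest is the
  number of ways to distribute the m copies of y among the n copies of x or to leave them
  alone; these numbers obey a binomial recursion in n.  Weighted by 1/(n! m!), the
  coefficients R(H) of exp(x) * exp(y) therefore satisfy
  |H| R(H) = \<Sum>(t \<in> H) c(t) R(H - t) with c = y + \<Sum>(k) x(y^k) / k! = y + x \<curvearrowleft> exp(y):
  removing a corolla accounts for the n corollas of H, removing a leaf y for its remaining
  |H| - n trees.  This recursion characterises the coefficients of exp(c).\<close>

lemma finite_submultisets: "finite {G. G \<subseteq># (F::'a multiset)}"
proof (induction F)
  case (add a F)
  have "{G. G \<subseteq># add_mset a F} \<subseteq> {G. G \<subseteq># F} \<union> add_mset a ` {G. G \<subseteq># F}"
  proof
    fix G assume G: "G \<in> {G. G \<subseteq># add_mset a F}"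
    show "G \<in> {G. G \<subseteq># F} \<union> add_mset a ` {G. G \<subseteq># F}"
    proof (cases "a \<in># G")
      case True
      then obtain G' where G': "G = add_mset a G'" by (metis multi_member_split)
      with G have "G' \<subseteq># F" by (simp add: mset_subset_eq_add_mset_cancel)
      with G' show ?thesis by blast
    next
      case False
      with G have "G \<subseteq># F" by (simp add: inter_add_left1 subset_mset.inf.absorb_iff2)
      then show ?thesis by simp
    qed
  qed
  with add show ?case by (meson finite_Un finite_imageI finite_subset)
qed simp

lemma add_mset_eq_iff_diff: "add_mset a M = H \<longleftrightarrow> a \<in># H \<and> M = H - {#a#}"
  by auto

lemma of_nat_size_Diff_singleton:
  assumes "t \<in># H"
  shows "of_nat (size (H - {#t#})) = of_nat (size H) - (1::'a::ring_1)"
proof -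
  from assms have "1 \<le> size H"
    by (auto simp: Suc_le_eq nonempty_has_size[symmetric])
  with assms show ?thesis
    by (simp add: size_Diff_singleton of_nat_diff)
qed

lemma count_sum_mset: "count (\<Sum>\<^sub># MM) u = (\<Sum>X\<in>#MM. count X u)"
  by (induction MM) auto

lemma sum_nth_eq_sum_mset: "(\<Sum>i<length xs. f (xs ! i)) = (\<Sum>x\<in>#mset xs. f x)"
proof -
  have "(\<Sum>i<length xs. f (xs ! i)) = sum_list (map f xs)"
    by (simp add: sum_list_sum_nth lessThan_atLeast0)
  then show ?thesis
    by (metis mset_map sum_mset_sum_list)
qed

lemma sum_atMost_triangle_swap:
  "(\<Sum>m\<le>(w::nat). \<Sum>k\<le>m. h k (m - k)) = (\<Sum>k\<le>w. \<Sum>j\<le>w - k. (h k j :: 'a::comm_monoid_add))"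
proof -
  have "(\<Sum>m\<le>w. \<Sum>k\<le>m. h k (m - k)) = (\<Sum>(k, j)\<in>{(k, j). k + j \<le> w}. h k j)"
    by (rule sum.triangle_reindex_eq[symmetric])
  also have "{(k, j). k + j \<le> w} = Sigma {..w} (\<lambda>k. {..w - k})"
    by auto
  finally show ?thesis
    by (simp add: sum.Sigma)
qed

lemma sum_Pow_by_card:
  assumes "finite A"
  shows "(\<Sum>S\<in>Pow A. g (card S) (card (A - S)) :: 'b::comm_semiring_1)
       = (\<Sum>k\<le>card A. of_nat (card A choose k) * g k (card A - k))"
proof -
  have "(\<Sum>S\<in>Pow A. g (card S) (card (A - S)))
      = (\<Sum>k\<le>card A. \<Sum>S\<in>{S\<in>Pow A. card S = k}. g (card S) (card (A - S)))"
    by (rule sum.group[symmetric]) (auto simp: assms card_mono)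
  also have "\<dots> = (\<Sum>k\<le>card A. of_nat (card A choose k) * g k (card A - k))"
  proof (rule sum.cong)
    fix k
    have "(\<Sum>S\<in>{S\<in>Pow A. card S = k}. g (card S) (card (A - S))) = (\<Sum>S\<in>{S. S \<subseteq> A \<and> card S = k}. g k (card A - k))"
      by (rule sum.cong) (auto simp: card_Diff_subset finite_subset[OF _ assms])
    then show "(\<Sum>S\<in>{S\<in>Pow A. card S = k}. g (card S) (card (A - S))) = of_nat (card A choose k) * g k (card A - k)"
      by (simp add: n_subsets assms)
  qed simp
  finally show ?thesis .
qed

lemma sum_set_mset_remove_swap:
  "(\<Sum>t\<in>set_mset H. c t * (if a \<in># H - {#t#} then f (H - {#t#} - {#a#}) else 0))
     = (if a \<in># H then (\<Sum>t\<in>set_mset (H - {#a#}). c t * f (H - {#a#} - {#t#})) else (0::'b::semiring_0))"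
proof (cases "a \<in># H")
  case True
  have "(\<Sum>t\<in>set_mset H. c t * (if a \<in># H - {#t#} then f (H - {#t#} - {#a#}) else 0))
      = (\<Sum>t\<in>set_mset H. if t \<in># H - {#a#} then c t * f (H - {#a#} - {#t#}) else 0)"
  proof (rule sum.cong)
    fix t assume "t \<in> set_mset H"
    with True have "a \<in># H - {#t#} \<longleftrightarrow> t \<in># H - {#a#}"
      by (cases "t = a") (auto simp: in_diff_count)
    then show "c t * (if a \<in># H - {#t#} then f (H - {#t#} - {#a#}) else 0)
        = (if t \<in># H - {#a#} then c t * f (H - {#a#} - {#t#}) else 0)"
      by (simp add: diff_right_commute add_mset_commute)
  qed simp
  also have "\<dots> = (\<Sum>t\<in>set_mset (H - {#a#}). c t * f (H - {#a#} - {#t#}))"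
    by (rule sum.mono_neutral_cong_right) (auto dest: in_diffD)
  finally show ?thesis
    using True by simp
next
  case False
  then have "a \<notin># H - {#t#}" for t
    by (meson in_diffD)
  with False show ?thesis
    by simp
qed

lemma single_apply: "single a b = (if b = a then 1 else 0)"
  by (simp add: single_def)

lemma sum_single_mult:
  assumes "finite S"
  shows "(\<Sum>u\<in>S. single t u * f u) = (if t \<in> S then f t else (0::'k::comm_ring_1))"
proof -
  have "(\<Sum>u\<in>S. single t u * f u) = (\<Sum>u\<in>S. if u = t then f u else 0)"
    by (rule sum.cong) (simp_all add: single_apply)
  with assms show ?thesis
    by simp
qed

lemma sum_count_mult_single:
  "(\<Sum>v\<in>set_mset A. (of_nat (count A v) :: 'k::comm_ring_1) * single (g v) u)
     = of_nat (count (image_mset g A) u)"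
proof -
  have "(\<Sum>v\<in>set_mset A. (of_nat (count A v) :: 'k) * single (g v) u)
      = (\<Sum>v\<in>g -` {u} \<inter> set_mset A. of_nat (count A v))"
    by (simp add: single_apply if_distrib sum.If_cases vimage_def Int_commute eq_commute cong: if_cong)
  also have "\<dots> = of_nat (count (image_mset g A) u)"
    by (simp add: count_image_mset)
  finally show ?thesis .
qed

lemma tree_emb_singleton: "tree_emb (c :: 'a dtree \<Rightarrow> 'k::comm_ring_1) {#t#} = c t"
proof -
  have "{a. c a \<noteq> 0 \<and> (single {#a#} {#t#} :: 'k) \<noteq> 0} = (if c t = 0 then {} else {t})"
    by (auto simp: single_apply)
  then show ?thesis by (simp add: tree_emb_def lin_def single_apply)
qed

lemma tree_emb_non_singleton:
  assumes "\<forall>t. G \<noteq> {#t#}"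
  shows "tree_emb (c :: 'a dtree \<Rightarrow> 'k::comm_ring_1) G = 0"
proof -
  have "{a. c a \<noteq> 0 \<and> (single {#a#} G :: 'k) \<noteq> 0} = {}"
    using assms by (auto simp: single_apply)
  then show ?thesis unfolding tree_emb_def lin_def by (simp only: sum.empty)
qed

lemma tree_emb_single: "tree_emb (single t :: 'a dtree \<Rightarrow> 'k::comm_ring_1) = single {#t#}"
proof
  fix G
  show "tree_emb (single t :: 'a dtree \<Rightarrow> 'k) G = single {#t#} G"
  proof (cases "\<exists>u. G = {#u#}")
    case True
    then show ?thesis by (auto simp: tree_emb_singleton single_apply split: if_splits)
  next
    case False
    then show ?thesis by (auto simp: tree_emb_non_singleton single_apply)
  qed
qed

lemma fmult_tree_emb:
  "fmult (tree_emb c) w H = (\<Sum>t\<in>set_mset H. c t * w (H - {#t#}))"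
proof -
  have "fmult (tree_emb c) w H = (\<Sum>G\<in>(\<lambda>t. {#t#}) ` set_mset H. tree_emb c G * w (H - G))"
    unfolding fmult_def
  proof (rule sum.mono_neutral_right)
    show "\<forall>G\<in>{G. G \<subseteq># H} - (\<lambda>t. {#t#}) ` set_mset H. tree_emb c G * w (H - G) = 0"
    proof
      fix G assume "G \<in> {G. G \<subseteq># H} - (\<lambda>t. {#t#}) ` set_mset H"
      then have "\<forall>t. G \<noteq> {#t#}" by auto
      then show "tree_emb c G * w (H - G) = 0" by (simp add: tree_emb_non_singleton)
    qed
  qed (auto simp: finite_submultisets)
  also have "\<dots> = (\<Sum>t\<in>set_mset H. c t * w (H - {#t#}))"
    by (subst sum.reindex) (auto simp: inj_on_def tree_emb_singleton)
  finally show ?thesis .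
qed

lemma fmult_single_left: "fmult (single A) w F = (if A \<subseteq># F then w (F - A) else 0)"
proof -
  have "fmult (single A) w F = (\<Sum>G\<in>{G. G \<subseteq># F}. if G = A then w (F - G) else 0)"
    unfolding fmult_def by (rule sum.cong) (auto simp: single_apply)
  then show ?thesis by (simp add: finite_submultisets)
qed

lemma fmult_single: "fmult (single A) (single B) = single (A + B)"
proof
  fix F
  have "A \<subseteq># F \<Longrightarrow> F - A = B \<longleftrightarrow> F = A + B"
    by (metis add_diff_cancel_left' subset_mset.add_diff_inverse)
  then show "fmult (single A) (single B) F = single (A + B) F"
    by (auto simp: fmult_single_left single_apply)
qed

lemma fprod_map_single:
  "fprod (map (\<lambda>i. single {#t i#}) xs) = (single (mset (map t xs)) :: 'a forest \<Rightarrow> 'k::comm_ring_1)"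
  by (induction xs) (simp_all add: fprod_def funit_def fmult_single)

section \<open>Exponentials of linear combinations of trees\<close>

definition exp_coeff :: "('a \<Rightarrow> 'k::field_char_0) \<Rightarrow> 'a multiset \<Rightarrow> 'k" where
  "exp_coeff c H = (\<Prod>t\<in>set_mset H. c t ^ count H t / fact (count H t))"

lemma exp_coeff_empty [simp]: "exp_coeff c {#} = 1"
  by (simp add: exp_coeff_def)

lemma exp_coeff_superset:
  assumes "finite S" "set_mset H \<subseteq> S"
  shows "exp_coeff c H = (\<Prod>t\<in>S. c t ^ count H t / fact (count H t))"
  unfolding exp_coeff_def
  by (rule prod.mono_neutral_left) (use assms in \<open>auto simp: not_in_iff\<close>)

lemma exp_coeff_diff_singleton:
  fixes c :: "'a \<Rightarrow> 'k::field_char_0"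
  assumes "t \<in># H"
  shows "exp_coeff c H * of_nat (count H t) = c t * exp_coeff c (H - {#t#})"
proof -
  let ?S = "set_mset H"
  let ?P = "\<Prod>u\<in>?S - {t}. c u ^ count H u / fact (count H u)"
  obtain j where j: "count H t = Suc j"
    using assms by (metis count_greater_zero_iff not0_implies_Suc not_gr0)
  have exp_H: "exp_coeff c H = c t ^ Suc j / fact (Suc j) * ?P"
    unfolding exp_coeff_def using assms j by (simp add: prod.remove)
  have exp_diff: "exp_coeff c (H - {#t#}) = c t ^ j / fact j * ?P"
  proof -
    have "exp_coeff c (H - {#t#}) = (\<Prod>u\<in>?S. c u ^ count (H - {#t#}) u / fact (count (H - {#t#}) u))"
      by (rule exp_coeff_superset) (auto dest: in_diffD)
    also have "\<dots> = c t ^ j / fact j * (\<Prod>u\<in>?S - {t}. c u ^ count (H - {#t#}) u / fact (count (H - {#t#}) u))"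
      using assms j by (simp add: prod.remove)
    also have "(\<Prod>u\<in>?S - {t}. c u ^ count (H - {#t#}) u / fact (count (H - {#t#}) u)) = ?P"
      by (rule prod.cong) auto
    finally show ?thesis .
  qed
  have "exp_coeff c H * of_nat (count H t) = c t ^ Suc j / fact (Suc j) * of_nat (Suc j) * ?P"
    unfolding exp_H j by (simp only: ac_simps)
  also have "c t ^ Suc j / fact (Suc j) * of_nat (Suc j) = c t * (c t ^ j / fact j)"
    by (simp add: field_simps del: of_nat_Suc)
  finally show ?thesis
    by (simp add: exp_diff)
qed

lemma exp_coeff_recurrence:
  "of_nat (size H) * exp_coeff c H = (\<Sum>t\<in>set_mset H. c t * exp_coeff c (H - {#t#}))"
proof -
  have "of_nat (size H) * exp_coeff c H = (\<Sum>t\<in>set_mset H. exp_coeff c H * of_nat (count H t))"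
    by (simp add: size_multiset_overloaded_eq sum_distrib_left mult.commute)
  also have "\<dots> = (\<Sum>t\<in>set_mset H. c t * exp_coeff c (H - {#t#}))"
    by (rule sum.cong) (auto simp: exp_coeff_diff_singleton)
  finally show ?thesis .
qed

lemma exp_coeff_unique:
  fixes R :: "'a multiset \<Rightarrow> 'k::field_char_0"
  assumes "R {#} = 1"
    and "\<And>H. of_nat (size H) * R H = (\<Sum>t\<in>set_mset H. c t * R (H - {#t#}))"
  shows "R H = exp_coeff c H"
proof (induction "size H" arbitrary: H rule: less_induct)
  case less
  have "of_nat (size H) * R H = of_nat (size H) * exp_coeff c H"
    unfolding assms(2) exp_coeff_recurrence
  proof (rule sum.cong)
    fix t assume "t \<in> set_mset H"
    then have "size (H - {#t#}) < size H" by (simp add: size_Diff1_less)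
    then show "c t * R (H - {#t#}) = c t * exp_coeff c (H - {#t#})" by (simp add: less.hyps)
  qed simp
  then show ?case using assms(1) by (cases "H = {#}") simp_all
qed

lemma fpow_tree_emb:
  "fpow (tree_emb c) n H = (if size H = n then fact n * exp_coeff c H else 0)"
proof (induction n arbitrary: H)
  case 0
  show ?case by (simp add: funit_def single_apply)
next
  case (Suc n)
  have "fpow (tree_emb c) (Suc n) H
      = (\<Sum>t\<in>set_mset H. c t * (if size H = Suc n then fact n * exp_coeff c (H - {#t#}) else 0))"
  proof -
    have "size (H - {#t#}) = n \<longleftrightarrow> size H = Suc n" if "t \<in># H" for t
    proof -
      from that have "0 < size H" by (auto simp: nonempty_has_size[symmetric])
      then show ?thesis by (auto simp: size_Diff_singleton[OF that])
    qed
    then show ?thesis by (auto simp: fmult_tree_emb Suc.IH intro: sum.cong)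
  qed
  also have "\<dots> = (if size H = Suc n then fact n * (\<Sum>t\<in>set_mset H. c t * exp_coeff c (H - {#t#})) else 0)"
    by (simp add: sum_distrib_left algebra_simps)
  also have "\<dots> = (if size H = Suc n then fact (Suc n) * exp_coeff c H else 0)"
    by (cases "size H = Suc n") (simp_all add: algebra_simps flip: exp_coeff_recurrence)
  finally show ?case .
qed

lemma fexp_tree_emb: "fexp (tree_emb c) = exp_coeff c"
proof
  fix H
  have "{n. fpow (tree_emb c) n H \<noteq> 0} = (if exp_coeff c H = 0 then {} else {size H})"
    by (auto simp: fpow_tree_emb)
  then show "fexp (tree_emb c) H = exp_coeff c H"
    by (auto simp: fexp_def fpow_tree_emb)
qed

lemma exp_coeff_single:
  "exp_coeff (single a) F = (if set_mset F \<subseteq> {a} then 1 / fact (size F) else (0::'k::field_char_0))"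
proof (cases "set_mset F \<subseteq> {a}")
  case True
  then have "F = replicate_mset (size F) a"
    by (rule set_mset_subset_singletonD)
  then have "count F a = size F"
    by (metis count_replicate_mset)
  with True show ?thesis
    using exp_coeff_superset[of "{a}" F "single a"] by (simp add: single_apply)
next
  case False
  then obtain t where t: "t \<in># F" "t \<noteq> a" by auto
  then have "exp_coeff (single a) F = (0::'k)"
    unfolding exp_coeff_def by (intro prod_zero) (auto simp: single_apply)
  with False show ?thesis by simp
qed

section \<open>Forests acting on a leaf\<close>

lemma graft_lin_single:
  "graft_lin (single t :: 'a dtree \<Rightarrow> 'k::comm_ring_1) s u = of_nat (count (graft t s) u)"
proof -
  have "{a. (single t a :: 'k) \<noteq> 0 \<and> (of_nat (count (graft a s) u) :: 'k) \<noteq> 0}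
        = (if (of_nat (count (graft t s) u) :: 'k) = 0 then {} else {t})"
    by (auto simp: single_apply)
  then show ?thesis
    unfolding graft_lin_def lin_def by (auto simp: single_apply)
qed

lemma count_graft_Node:
  "count (graft (Node d M) s) u
     = count {#Node d (add_mset s M)#} u
       + (\<Sum>c\<in>#M. count (image_mset (\<lambda>c'. Node d (add_mset c' (M - {#c#}))) (graft c s)) u)"
  by (simp add: count_sum_mset multiset.map_comp o_def)

text \<open>Grafting s onto the tree d(t1 ... tn) also grafts s into each ti; these are
  exactly the correction terms in the definition of the action, so only the new child of the
  root survives.\<close>

lemma act_r_leaf: "act_r (Node d {#}) rs = (single (Node d (mset rs)) :: 'a dtree \<Rightarrow> 'k::comm_ring_1)"
proof (induction rs rule: measure_induct_rule[of length])
  case (less rs)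
  show ?case
  proof (cases rs)
    case Nil
    then show ?thesis by simp
  next
    case (Cons s rs')
    let ?M = "mset rs'"
    let ?g = "\<lambda>c c'. Node d (add_mset c' (?M - {#c#}))"
    have IH: "act_r (Node d {#}) rs' = (single (Node d ?M) :: 'a dtree \<Rightarrow> 'k)"
      "\<And>i v. i < length rs' \<Longrightarrow> act_r (Node d {#}) (rs'[i := v]) = (single (?g (rs' ! i) v) :: 'a dtree \<Rightarrow> 'k)"
      using less Cons by (simp_all add: mset_update)
    show ?thesis
    proof
      fix u
      have graft_count: "of_nat (count (graft (Node d ?M) s) u)
          = (of_nat (count {#Node d (add_mset s ?M)#} u) :: 'k)
            + (\<Sum>c\<in>#?M. of_nat (count (image_mset (?g c) (graft c s)) u))"
        unfolding count_graft_Node by (simp add: multiset.map_comp o_def)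
      have "act_r (Node d {#}) rs u = of_nat (count (graft (Node d ?M) s) u)
         - (\<Sum>i<length rs'. \<Sum>v\<in>set_mset (graft (rs' ! i) s).
              of_nat (count (graft (rs' ! i) s) v) * (single (?g (rs' ! i) v) u :: 'k))"
        unfolding Cons act_r.simps IH(1) graft_lin_single
        by (intro arg_cong2[where f="(-)"] refl sum.cong) (simp_all add: IH(2))
      also have "\<dots> = of_nat (count (graft (Node d ?M) s) u)
         - (\<Sum>c\<in>#?M. of_nat (count (image_mset (?g c) (graft c s)) u))"
        by (simp add: sum_count_mult_single
            sum_nth_eq_sum_mset[where f="\<lambda>c. of_nat (count (image_mset (?g c) (graft c s)) u)"])
      also have "\<dots> = of_nat (count {#Node d (add_mset s ?M)#} u)"
        unfolding graft_count by simp
      finally show "act_r (Node d {#}) rs u = (single (Node d (mset rs)) u :: 'k)"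
        by (simp add: Cons single_apply)
    qed
  qed
qed

lemma act_leaf: "act (leaf d) F = (single (Node d F) :: 'a dtree \<Rightarrow> 'k::comm_ring_1)"
proof -
  have "mset (SOME xs. mset xs = F) = F"
    by (rule someI_ex) (rule ex_mset)
  then show ?thesis by (simp add: act_def act_r_leaf leaf_def)
qed

lemma act_lin_leaf: "act_lin (leaf x) c (Node d F) = (if d = x then c F else (0::'k::comm_ring_1))"
proof -
  have "{G. c G \<noteq> 0 \<and> (single (Node x G) (Node d F) :: 'k) \<noteq> 0} = (if d = x \<and> c F \<noteq> 0 then {F} else {})"
    by (auto simp: single_apply)
  then show ?thesis
    by (auto simp: act_lin_def lin_def act_leaf single_apply)
qed

section \<open>Products of powers of two leaves\<close>

definition corolla :: "'d \<Rightarrow> 'd \<Rightarrow> nat \<Rightarrow> 'd dtree" where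
  "corolla x y k = Node x (replicate_mset k (leaf y))"

lemma corolla_inject [simp]: "corolla x y k = corolla x y k' \<longleftrightarrow> k = k'"
  unfolding corolla_def by (metis dtree.inject size_replicate_mset)

definition fibre_card :: "'a set \<Rightarrow> ('a \<Rightarrow> nat) \<Rightarrow> nat \<Rightarrow> nat" where
  "fibre_card A f j = card {a\<in>A. f a = j}"

text \<open>The term of the product of x^n and y^m indexed by f : A \<rightarrow> {0..n}, where A labels
  the m copies of y: the copies sent to 0 stay in the forest, those sent to i+1 are
  grafted onto the i-th copy of x.\<close>

definition gl_forest :: "'d \<Rightarrow> 'd \<Rightarrow> 'a set \<Rightarrow> nat \<Rightarrow> ('a \<Rightarrow> nat) \<Rightarrow> 'd forest" where
  "gl_forest x y A n f = replicate_mset (fibre_card A f 0) (leaf y)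
     + mset (map (\<lambda>i. corolla x y (fibre_card A f (Suc i))) [0..<n])"

definition extend_top :: "'a set \<Rightarrow> nat \<Rightarrow> ('a \<Rightarrow> nat) \<Rightarrow> 'a \<Rightarrow> nat" where
  "extend_top S n g = (\<lambda>a. if a \<in> S then Suc n else g a)"

lemma extend_top_PiE:
  assumes "S \<subseteq> A" "g \<in> (A - S) \<rightarrow>\<^sub>E {..n}"
  shows "extend_top S n g \<in> A \<rightarrow>\<^sub>E {..Suc n}" "{a\<in>A. extend_top S n g a = Suc n} = S"
  using assms by (auto simp: extend_top_def PiE_def extensional_def Pi_def)

lemma extend_top_restrict:
  assumes "f \<in> A \<rightarrow>\<^sub>E {..Suc n}" "S = {a\<in>A. f a = Suc n}"
  shows "restrict f (A - S) \<in> (A - S) \<rightarrow>\<^sub>E {..n}" "extend_top S n (restrict f (A - S)) = f"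
proof -
  show "restrict f (A - S) \<in> (A - S) \<rightarrow>\<^sub>E {..n}"
    using assms by (auto simp: PiE_def Pi_def le_Suc_eq)
  show "extend_top S n (restrict f (A - S)) = f"
  proof
    fix a
    show "extend_top S n (restrict f (A - S)) a = f a"
      using assms by (cases "a \<in> A") (auto simp: extend_top_def PiE_def extensional_def)
  qed
qed

lemma inj_on_extend_top: "inj_on (extend_top S n) ((A - S) \<rightarrow>\<^sub>E {..n})"
proof (rule inj_onI)
  fix g h assume g: "g \<in> (A - S) \<rightarrow>\<^sub>E {..n}" and h: "h \<in> (A - S) \<rightarrow>\<^sub>E {..n}"
    and eq: "extend_top S n g = extend_top S n h"
  show "g = h"
  proof
    fix a
    show "g a = h a"
    proof (cases "a \<in> S")
      case True
      with g h show ?thesis by (auto simp: PiE_def extensional_def)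
    next
      case False
      with fun_cong[OF eq, of a] show ?thesis by (simp add: extend_top_def)
    qed
  qed
qed

lemma gl_forest_extend_top:
  assumes "S \<subseteq> A" "g \<in> (A - S) \<rightarrow>\<^sub>E {..n}"
  shows "gl_forest x y A (Suc n) (extend_top S n g) = add_mset (corolla x y (card S)) (gl_forest x y (A - S) n g)"
proof -
  have fibres: "fibre_card A (extend_top S n g) j = fibre_card (A - S) g j" if "j \<le> n" for j
  proof -
    have "{a\<in>A. extend_top S n g a = j} = {a\<in>A - S. g a = j}"
      using that by (auto simp: extend_top_def)
    then show ?thesis by (simp add: fibre_card_def)
  qed
  have top: "fibre_card A (extend_top S n g) (Suc n) = card S"
    using extend_top_PiE(2)[OF assms] by (simp add: fibre_card_def)
  have children: "map (\<lambda>i. corolla x y (fibre_card A (extend_top S n g) (Suc i))) [0..<n]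
      = map (\<lambda>i. corolla x y (fibre_card (A - S) g (Suc i))) [0..<n]"
    by (rule map_cong[OF refl]) (simp add: fibres)
  then show ?thesis
    unfolding gl_forest_def upt_Suc_append[OF le0] map_append mset_append children fibres[OF le0]
    by (simp add: top)
qed

lemma card_gl_forest_top_fibre:
  assumes "S \<subseteq> A"
  shows "card {f\<in>A \<rightarrow>\<^sub>E {..Suc n}. gl_forest x y A (Suc n) f = H \<and> {a\<in>A. f a = Suc n} = S}
       = (if corolla x y (card S) \<in># H
          then card {g\<in>(A - S) \<rightarrow>\<^sub>E {..n}. gl_forest x y (A - S) n g = H - {#corolla x y (card S)#}}
          else 0)"
proof -
  let ?F = "{f\<in>A \<rightarrow>\<^sub>E {..Suc n}. gl_forest x y A (Suc n) f = H \<and> {a\<in>A. f a = Suc n} = S}"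
  let ?G = "{g\<in>(A - S) \<rightarrow>\<^sub>E {..n}. add_mset (corolla x y (card S)) (gl_forest x y (A - S) n g) = H}"
  have "?F = extend_top S n ` ?G"
  proof (intro equalityI subsetI)
    fix f assume "f \<in> ?F"
    then have f: "f \<in> A \<rightarrow>\<^sub>E {..Suc n}" "S = {a\<in>A. f a = Suc n}" "gl_forest x y A (Suc n) f = H"
      by simp_all
    note r = extend_top_restrict[OF f(1,2)]
    from gl_forest_extend_top[OF assms r(1), where x = x and y = y]
    have "add_mset (corolla x y (card S)) (gl_forest x y (A - S) n (restrict f (A - S))) = H"
      unfolding r(2) f(3) by (rule sym)
    with r(1) have "restrict f (A - S) \<in> ?G"
      by blast
    then show "f \<in> extend_top S n ` ?G"
    proof (rule rev_image_eqI)
      show "f = extend_top S n (restrict f (A - S))"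
        using r(2) by (rule sym)
    qed
  next
    fix f assume "f \<in> extend_top S n ` ?G"
    then obtain g where g: "g \<in> (A - S) \<rightarrow>\<^sub>E {..n}"
      "add_mset (corolla x y (card S)) (gl_forest x y (A - S) n g) = H" and f: "f = extend_top S n g"
      by blast
    then show "f \<in> ?F"
      using extend_top_PiE[OF assms g(1)] gl_forest_extend_top[OF assms g(1), where x = x and y = y]
      by simp
  qed
  moreover have "card (extend_top S n ` ?G) = card ?G"
    by (rule card_image, rule inj_on_subset[OF inj_on_extend_top]) blast
  moreover have "?G = (if corolla x y (card S) \<in># H
      then {g\<in>(A - S) \<rightarrow>\<^sub>E {..n}. gl_forest x y (A - S) n g = H - {#corolla x y (card S)#}} else {})"
    by (auto simp: add_mset_eq_iff_diff)
  ultimately show ?thesis by simp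
qed

lemma card_gl_forest_Suc:
  assumes "finite A"
  shows "card {f\<in>A \<rightarrow>\<^sub>E {..Suc n}. gl_forest x y A (Suc n) f = H}
       = (\<Sum>S\<in>Pow A. if corolla x y (card S) \<in># H
          then card {g\<in>(A - S) \<rightarrow>\<^sub>E {..n}. gl_forest x y (A - S) n g = H - {#corolla x y (card S)#}}
          else 0)"
proof -
  let ?T = "\<lambda>S. {f\<in>A \<rightarrow>\<^sub>E {..Suc n}. gl_forest x y A (Suc n) f = H \<and> {a\<in>A. f a = Suc n} = S}"
  have "{f\<in>A \<rightarrow>\<^sub>E {..Suc n}. gl_forest x y A (Suc n) f = H} = (\<Union>S\<in>Pow A. ?T S)"
    by auto
  then have "card {f\<in>A \<rightarrow>\<^sub>E {..Suc n}. gl_forest x y A (Suc n) f = H} = (\<Sum>S\<in>Pow A. card (?T S))"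
    by (simp only:) (rule card_UN_disjoint, auto simp: assms finite_PiE)
  also have "\<dots> = (\<Sum>S\<in>Pow A. if corolla x y (card S) \<in># H
          then card {g\<in>(A - S) \<rightarrow>\<^sub>E {..n}. gl_forest x y (A - S) n g = H - {#corolla x y (card S)#}}
          else 0)"
    by (rule sum.cong) (simp_all add: card_gl_forest_top_fibre)
  finally show ?thesis .
qed

text \<open>Recursion over the last copy of x: the k copies of y grafted onto it can be chosen in
  (m choose k) ways.\<close>

primrec gl_count :: "'d \<Rightarrow> 'd \<Rightarrow> nat \<Rightarrow> nat \<Rightarrow> 'd forest \<Rightarrow> nat" where
  "gl_count x y 0 m H = (if H = replicate_mset m (leaf y) then 1 else 0)"
| "gl_count x y (Suc n) m H = (\<Sum>k\<le>m. (m choose k)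
     * (if corolla x y k \<in># H then gl_count x y n (m - k) (H - {#corolla x y k#}) else 0))"

lemma card_gl_forest_0:
  "card {f\<in>A \<rightarrow>\<^sub>E {..0}. gl_forest x y A 0 f = H} = (if H = replicate_mset (card A) (leaf y) then 1 else 0)"
proof -
  define f0 :: "'a \<Rightarrow> nat" where "f0 = (\<lambda>a. if a \<in> A then 0 else undefined)"
  have "A \<rightarrow>\<^sub>E {..0} = {f0}"
    by (auto simp: f0_def PiE_def extensional_def Pi_def)
  moreover have "gl_forest x y A 0 f0 = replicate_mset (card A) (leaf y)"
    by (simp add: gl_forest_def fibre_card_def f0_def)
  ultimately have "{f\<in>A \<rightarrow>\<^sub>E {..0}. gl_forest x y A 0 f = H}
      = (if H = replicate_mset (card A) (leaf y) then {f0} else {})"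
    by (simp only: Collect_conj_eq) auto
  then show ?thesis by simp
qed

lemma card_gl_forest:
  "finite A \<Longrightarrow> card {f\<in>A \<rightarrow>\<^sub>E {..n}. gl_forest x y A n f = H} = gl_count x y n (card A) H"
proof (induction n arbitrary: A H)
  case 0
  show ?case unfolding gl_count.simps by (rule card_gl_forest_0)
next
  case (Suc n)
  have "card {f\<in>A \<rightarrow>\<^sub>E {..Suc n}. gl_forest x y A (Suc n) f = H}
      = (\<Sum>S\<in>Pow A. (\<lambda>k j. if corolla x y k \<in># H then gl_count x y n j (H - {#corolla x y k#}) else 0)
                       (card S) (card (A - S)))"
    unfolding card_gl_forest_Suc[OF Suc.prems]
    by (rule sum.cong) (auto simp: Suc.IH Suc.prems)
  also have "\<dots> = gl_count x y (Suc n) (card A) H"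
    by (subst sum_Pow_by_card[OF Suc.prems]) simp
  finally show ?case .
qed

lemma some_mset_replicate: "(SOME xs. mset xs = replicate_mset n a) = replicate n a"
proof (rule some_equality)
  fix xs assume xs: "mset xs = replicate_mset n a"
  then have "set xs \<subseteq> {a}" "length xs = n"
    by (metis set_mset_mset set_mset_replicate_mset_subset subset_singletonD subset_refl empty_subsetI)
       (metis size_mset size_replicate_mset xs)
  then show "xs = replicate n a"
    by (metis replicate_length_same singletonD subsetD)
qed simp

lemma image_mset_nth_replicate:
  assumes "S \<subseteq> {..<m}"
  shows "image_mset (nth (replicate m a)) (mset_set S) = replicate_mset (card S) a"
proof -
  have "finite S"
    using assms finite_subset by blast
  with assms have "image_mset (nth (replicate m a)) (mset_set S) = image_mset (\<lambda>_. a) (mset_set S)"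
    by (intro image_mset_cong) auto
  with \<open>finite S\<close> show ?thesis
    by (simp add: image_mset_const_eq)
qed

lemma gl_basis_replicate_leaves:
  "gl_basis (replicate_mset n (leaf x)) (replicate_mset m (leaf y)) H
     = (of_nat (gl_count x y n m H) :: 'k::comm_ring_1)"
proof -
  let ?ts = "replicate n (leaf x)" and ?ss = "replicate m (leaf y)"
  let ?F = "\<lambda>f i. image_mset (nth ?ss) (mset_set {j\<in>{..<m}. f j = i})"
  have fibre: "?F f i = replicate_mset (fibre_card {..<m} f i) (leaf y)" for f i
    unfolding fibre_card_def by (rule image_mset_nth_replicate) auto
  have summand: "fmult (single (?F f 0)) (fprod (map (\<lambda>i. tree_emb (act (?ts ! i) (?F f (Suc i)))) [0..<n])) H
        = (if H = gl_forest x y {..<m} n f then 1 else (0::'k))" for f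
  proof -
    have children: "map (\<lambda>i. tree_emb (act (?ts ! i) (replicate_mset (fibre_card {..<m} f (Suc i)) (leaf y)))) [0..<n]
        = map (\<lambda>i. (single {#corolla x y (fibre_card {..<m} f (Suc i))#} :: _ \<Rightarrow> 'k)) [0..<n]"
      by (rule map_cong[OF refl]) (simp add: act_leaf tree_emb_single corolla_def)
    show ?thesis
      unfolding fibre children fprod_map_single fmult_single gl_forest_def single_apply ..
  qed
  have "gl_basis (replicate_mset n (leaf x)) (replicate_mset m (leaf y)) H
      = (\<Sum>f\<in>{..<m} \<rightarrow>\<^sub>E {..n}. if H = gl_forest x y {..<m} n f then 1 else (0::'k))"
    unfolding gl_basis_def some_mset_replicate Let_def length_replicate summand ..
  also have "\<dots> = of_nat (card {f\<in>{..<m} \<rightarrow>\<^sub>E {..n}. gl_forest x y {..<m} n f = H})"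
    by (simp add: sum.If_cases finite_PiE Int_def eq_commute conj_commute)
  also have "\<dots> = of_nat (gl_count x y n m H)"
    by (simp add: card_gl_forest)
  finally show ?thesis .
qed

primrec num_vertices :: "'d dtree \<Rightarrow> nat" where
  "num_vertices (Node d cs) = Suc (sum_mset (image_mset num_vertices cs))"

definition forest_vertices :: "'d forest \<Rightarrow> nat" where
  "forest_vertices F = sum_mset (image_mset num_vertices F)"

lemma forest_vertices_diff_singleton:
  "t \<in># H \<Longrightarrow> forest_vertices H = forest_vertices (H - {#t#}) + num_vertices t"
  by (metis add.commute forest_vertices_def image_mset_add_mset insert_DiffM sum_mset.insert)

lemma num_vertices_corolla [simp]: "num_vertices (corolla x y k) = Suc k"
  by (simp add: corolla_def leaf_def)

lemma forest_vertices_replicate_leaf [simp]: "forest_vertices (replicate_mset m (leaf y)) = m"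
  by (simp add: forest_vertices_def leaf_def)

lemma gl_count_nonzero_bound:
  "gl_count x y n m H \<noteq> 0 \<Longrightarrow> m \<le> forest_vertices H \<and> n \<le> size H"
proof (induction n arbitrary: m H)
  case 0
  then show ?case by (simp split: if_splits)
next
  case (Suc n)
  then obtain k where k: "k \<le> m" "corolla x y k \<in># H"
    "gl_count x y n (m - k) (H - {#corolla x y k#}) \<noteq> 0"
    by (auto split: if_splits elim: sum.not_neutral_contains_not_neutral)
  from Suc.IH[OF k(3)] forest_vertices_diff_singleton[OF k(2)] size_Diff1_less[OF k(2)] k(1)
  show ?case by (simp; linarith)
qed

section \<open>The product of the two exponentials\<close>

text \<open>The coefficients of x^n * exp(y) and of exp(x) * exp(y), the products being
  Grossman--Larson products.\<close>

definition pow_gl_exp :: "'d \<Rightarrow> 'd \<Rightarrow> nat \<Rightarrow> 'd forest \<Rightarrow> 'k::field_char_0" where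
  "pow_gl_exp x y n H = (\<Sum>m\<le>forest_vertices H. of_nat (gl_count x y n m H) / fact m)"

definition exp_gl_exp :: "'d \<Rightarrow> 'd \<Rightarrow> 'd forest \<Rightarrow> 'k::field_char_0" where
  "exp_gl_exp x y H = (\<Sum>n\<le>size H. pow_gl_exp x y n H / fact n)"

lemma gl_eq_sum_superset:
  fixes a b :: "'d forest \<Rightarrow> 'k::comm_ring_1"
  assumes "finite T"
    and "\<And>F G. a F \<noteq> 0 \<Longrightarrow> b G \<noteq> 0 \<Longrightarrow> (gl_basis F G H :: 'k) \<noteq> 0 \<Longrightarrow> (F, G) \<in> T"
  shows "gl a b H = (\<Sum>(F, G)\<in>T. a F * b G * gl_basis F G H)"
  unfolding gl_def
  by (rule sum.mono_neutral_left) (use assms in auto)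

lemma gl_exp_leaves:
  "gl (exp_coeff (single (leaf x))) (exp_coeff (single (leaf y))) H = (exp_gl_exp x y H :: 'k::field_char_0)"
proof -
  let ?a = "exp_coeff (single (leaf x)) :: _ \<Rightarrow> 'k" and ?b = "exp_coeff (single (leaf y)) :: _ \<Rightarrow> 'k"
  define rep where "rep = (\<lambda>(n, m). (replicate_mset n (leaf x), replicate_mset m (leaf y)))"
  define I where "I = {..size H} \<times> {..forest_vertices H}"
  have "gl ?a ?b H = (\<Sum>(F, G)\<in>rep ` I. ?a F * ?b G * gl_basis F G H)"
  proof (rule gl_eq_sum_superset)
    fix F G assume FG: "?a F \<noteq> 0" "?b G \<noteq> 0" "(gl_basis F G H :: 'k) \<noteq> 0"
    have F: "F = replicate_mset (size F) (leaf x)" and G: "G = replicate_mset (size G) (leaf y)"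
      using FG(1,2) by (auto simp: exp_coeff_single intro: set_mset_subset_singletonD split: if_splits)
    with FG(3) have "gl_count x y (size F) (size G) H \<noteq> 0"
      by (metis gl_basis_replicate_leaves of_nat_0)
    then have "size G \<le> forest_vertices H \<and> size F \<le> size H"
      by (rule gl_count_nonzero_bound)
    then have "(size F, size G) \<in> I"
      unfolding I_def by simp
    with F G show "(F, G) \<in> rep ` I"
      unfolding rep_def by (metis (no_types, lifting) case_prod_conv image_eqI)
  qed (simp add: I_def)
  also have "\<dots> = (\<Sum>(n, m)\<in>I. of_nat (gl_count x y n m H) / (fact n * fact m))"
  proof (subst sum.reindex)
    show "inj_on rep I"
      by (auto simp: rep_def inj_on_def dest: arg_cong[of _ _ size])
  qed (auto simp: rep_def exp_coeff_single gl_basis_replicate_leaves intro!: sum.cong)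
  also have "\<dots> = exp_gl_exp x y H"
    unfolding I_def exp_gl_exp_def pow_gl_exp_def
    by (simp add: sum.cartesian_product sum_divide_distrib mult.commute)
  finally show ?thesis .
qed

lemma pow_gl_exp_bound:
  assumes "forest_vertices H \<le> B"
  shows "(\<Sum>m\<le>B. of_nat (gl_count x y n m H) / fact m) = (pow_gl_exp x y n H :: 'k::field_char_0)"
  unfolding pow_gl_exp_def
proof (rule sum.mono_neutral_right)
  show "\<forall>m\<in>{..B} - {..forest_vertices H}. (of_nat (gl_count x y n m H) / fact m :: 'k) = 0"
    using gl_count_nonzero_bound by fastforce
qed (use assms in auto)

lemma pow_gl_exp_eq_0: "size H < n \<Longrightarrow> pow_gl_exp x y n H = 0"
  unfolding pow_gl_exp_def using gl_count_nonzero_bound by (fastforce intro!: sum.neutral)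

lemma pow_gl_exp_0: "pow_gl_exp x y 0 H = (exp_coeff (single (leaf y)) H :: 'k::field_char_0)"
proof (cases "set_mset H \<subseteq> {leaf y}")
  case True
  then have H: "H = replicate_mset (size H) (leaf y)"
    by (rule set_mset_subset_singletonD)
  then have "forest_vertices H = size H"
    by (metis forest_vertices_replicate_leaf)
  moreover have "H = replicate_mset m (leaf y) \<longleftrightarrow> m = size H" for m
    by (subst H) (metis size_replicate_mset)
  moreover have "(\<Sum>m\<le>size H. of_nat (if m = size H then 1 else 0) / fact m) = (1 / fact (size H) :: 'k)"
    by (subst sum.remove[of _ "size H"]) auto
  ultimately show ?thesis
    using True by (simp add: pow_gl_exp_def exp_coeff_single)
next
  case False
  then have "H \<noteq> replicate_mset m (leaf y)" for m
    by (metis set_mset_replicate_mset_subset empty_subsetI order_refl)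
  with False show ?thesis
    by (simp add: pow_gl_exp_def exp_coeff_single)
qed

text \<open>The coefficients of x \<curvearrowleft> exp(y) = \<Sum>(k) x(y^k) / k!.\<close>

definition corolla_coeff :: "'d \<Rightarrow> 'd \<Rightarrow> 'd dtree \<Rightarrow> 'k::field_char_0" where
  "corolla_coeff x y u = (if \<exists>k. u = corolla x y k then 1 / fact (num_vertices u - 1) else 0)"

lemma corolla_coeff_corolla [simp]: "corolla_coeff x y (corolla x y k) = 1 / fact k"
  by (auto simp: corolla_coeff_def)

lemma act_lin_leaf_exp_leaf:
  "act_lin (leaf x) (exp_coeff (single (leaf y))) = (corolla_coeff x y :: _ \<Rightarrow> 'k::field_char_0)"
proof
  fix u :: "'a dtree"
  obtain d F where u: "u = Node d F"
    by (cases u)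
  show "act_lin (leaf x) (exp_coeff (single (leaf y))) u = (corolla_coeff x y u :: 'k)"
  proof (cases "d = x \<and> set_mset F \<subseteq> {leaf y}")
    case True
    then have "u = corolla x y (size F)"
      unfolding u corolla_def by (auto dest: set_mset_subset_singletonD)
    moreover from True have "act_lin (leaf x) (exp_coeff (single (leaf y))) u = (1 / fact (size F) :: 'k)"
      by (simp add: u act_lin_leaf exp_coeff_single)
    ultimately show ?thesis
      by simp
  next
    case False
    then have "\<nexists>k. u = corolla x y k"
      by (auto simp: u corolla_def split: if_splits)
    with False show ?thesis
      by (auto simp: u act_lin_leaf exp_coeff_single corolla_coeff_def)
  qed
qed

lemma gl_count_Suc_div_fact:
  "of_nat (gl_count x y (Suc n) m H) / fact m
     = (\<Sum>k\<le>m. if corolla x y k \<in># H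
          then 1 / fact k * (of_nat (gl_count x y n (m - k) (H - {#corolla x y k#})) / fact (m - k))
          else (0::'k::field_char_0))"
proof -
  have "(of_nat (gl_count x y (Suc n) m H) :: 'k) / fact m
      = (\<Sum>k\<le>m. of_nat (m choose k) / fact m * of_nat (if corolla x y k \<in># H
          then gl_count x y n (m - k) (H - {#corolla x y k#}) else 0))"
    by (simp add: sum_divide_distrib algebra_simps)
  also have "\<dots> = (\<Sum>k\<le>m. if corolla x y k \<in># H
      then 1 / fact k * (of_nat (gl_count x y n (m - k) (H - {#corolla x y k#})) / fact (m - k)) else 0)"
    by (rule sum.cong) (auto simp: binomial_fact)
  finally show ?thesis .
qed

lemma pow_gl_exp_Suc_corollas:
  "pow_gl_exp x y (Suc n) H
     = (\<Sum>k\<le>forest_vertices H. if corolla x y k \<in># H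
          then pow_gl_exp x y n (H - {#corolla x y k#}) / fact k else (0::'k::field_char_0))"
proof -
  let ?w = "forest_vertices H"
  define h where "h k j = (if corolla x y k \<in># H
    then 1 / fact k * (of_nat (gl_count x y n j (H - {#corolla x y k#})) / fact j) else (0::'k))" for k j
  have "pow_gl_exp x y (Suc n) H = (\<Sum>m\<le>?w. \<Sum>k\<le>m. h k (m - k))"
    unfolding pow_gl_exp_def gl_count_Suc_div_fact h_def ..
  also have "\<dots> = (\<Sum>k\<le>?w. \<Sum>j\<le>?w - k. h k j)"
    by (rule sum_atMost_triangle_swap)
  also have "\<dots> = (\<Sum>k\<le>?w. if corolla x y k \<in># H
      then pow_gl_exp x y n (H - {#corolla x y k#}) / fact k else 0)"
  proof (rule sum.cong)
    fix k
    show "(\<Sum>j\<le>?w - k. h k j) = (if corolla x y k \<in># H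
        then pow_gl_exp x y n (H - {#corolla x y k#}) / fact k else 0)"
    proof (cases "corolla x y k \<in># H")
      case True
      then have "forest_vertices (H - {#corolla x y k#}) \<le> ?w - k"
        using forest_vertices_diff_singleton[OF True] by simp
      then have "(\<Sum>j\<le>?w - k. of_nat (gl_count x y n j (H - {#corolla x y k#})) / fact j)
          = (pow_gl_exp x y n (H - {#corolla x y k#}) :: 'k)"
        by (rule pow_gl_exp_bound)
      moreover have "(\<Sum>j\<le>?w - k. h k j)
          = 1 / fact k * (\<Sum>j\<le>?w - k. of_nat (gl_count x y n j (H - {#corolla x y k#})) / fact j)"
        using True by (simp add: h_def sum_distrib_left)
      ultimately show ?thesis
        using True by simp
    qed (simp add: h_def)
  qed simp
  finally show ?thesis .
qed

lemma pow_gl_exp_Suc: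
  "pow_gl_exp x y (Suc n) H
     = (\<Sum>t\<in>set_mset H. corolla_coeff x y t * (pow_gl_exp x y n (H - {#t#}) :: 'k::field_char_0))"
proof -
  let ?K = "{k. corolla x y k \<in># H}"
  have "?K \<subseteq> {..forest_vertices H}"
    using forest_vertices_diff_singleton by fastforce
  then have "pow_gl_exp x y (Suc n) H = (\<Sum>k\<in>?K. pow_gl_exp x y n (H - {#corolla x y k#}) / fact k)"
    unfolding pow_gl_exp_Suc_corollas by (simp add: sum.If_cases Int_absorb1 Collect_conj_eq[symmetric])
  also have "\<dots> = (\<Sum>t\<in>corolla x y ` ?K. corolla_coeff x y t * pow_gl_exp x y n (H - {#t#}))"
    by (subst sum.reindex) (auto simp: inj_on_def)
  also have "\<dots> = (\<Sum>t\<in>set_mset H. corolla_coeff x y t * pow_gl_exp x y n (H - {#t#}))"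
    by (rule sum.mono_neutral_left) (auto simp: corolla_coeff_def)
  finally show ?thesis .
qed

text \<open>The forests in x^n * exp(y) consist of n corollas and leaves y; the factor |H| - n
  counts these leaves.\<close>

lemma pow_gl_exp_leaf_recurrence:
  "(of_nat (size H) - of_nat n) * pow_gl_exp x y n H
     = (if leaf y \<in># H then pow_gl_exp x y n (H - {#leaf y#}) else (0::'k::field_char_0))"
proof (induction n arbitrary: H)
  case 0
  have "of_nat (size H) * exp_coeff (single (leaf y)) H
      = (if leaf y \<in># H then exp_coeff (single (leaf y)) (H - {#leaf y#}) else (0::'k))"
    unfolding exp_coeff_recurrence by (simp add: sum_single_mult)
  then show ?case
    by (simp only: of_nat_0 diff_zero pow_gl_exp_0)
next
  case (Suc n)
  let ?Y = "leaf y"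
  have "(of_nat (size H) - of_nat (Suc n)) * pow_gl_exp x y (Suc n) H
      = (\<Sum>t\<in>set_mset H. corolla_coeff x y t
           * ((of_nat (size (H - {#t#})) - of_nat n) * (pow_gl_exp x y n (H - {#t#}) :: 'k)))"
    unfolding pow_gl_exp_Suc sum_distrib_left
    by (rule sum.cong) (simp_all add: of_nat_size_Diff_singleton algebra_simps)
  also have "\<dots> = (\<Sum>t\<in>set_mset H. corolla_coeff x y t
      * (if ?Y \<in># H - {#t#} then pow_gl_exp x y n (H - {#t#} - {#?Y#}) else 0))"
    by (simp add: Suc.IH)
  also have "\<dots> = (if ?Y \<in># H then pow_gl_exp x y (Suc n) (H - {#?Y#}) else 0)"
    by (simp add: sum_set_mset_remove_swap pow_gl_exp_Suc)
  finally show ?case .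
qed

lemma exp_gl_exp_corolla_part:
  "(\<Sum>n\<le>size H. of_nat n * pow_gl_exp x y n H / fact n)
     = (\<Sum>t\<in>set_mset H. corolla_coeff x y t * (exp_gl_exp x y (H - {#t#}) :: 'k::field_char_0))"
proof (cases "H = {#}")
  case False
  then obtain s where s: "size H = Suc s"
    by (metis nonempty_has_size gr0_implies_Suc)
  have "(\<Sum>n\<le>size H. of_nat n * pow_gl_exp x y n H / fact n)
      = (\<Sum>n\<le>s. of_nat (Suc n) * pow_gl_exp x y (Suc n) H / fact (Suc n) :: 'k)"
    unfolding s by (subst sum.atMost_Suc_shift) simp
  also have "\<dots> = (\<Sum>n\<le>s. pow_gl_exp x y (Suc n) H / fact n)"
    by (rule sum.cong) (simp_all add: field_simps del: of_nat_Suc)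
  also have "\<dots> = (\<Sum>t\<in>set_mset H. \<Sum>n\<le>s. corolla_coeff x y t * (pow_gl_exp x y n (H - {#t#}) / fact n))"
    unfolding pow_gl_exp_Suc by (simp add: sum_divide_distrib sum.swap[of _ "{..s}"])
  also have "\<dots> = (\<Sum>t\<in>set_mset H. corolla_coeff x y t * exp_gl_exp x y (H - {#t#}))"
    by (rule sum.cong) (simp_all add: exp_gl_exp_def size_Diff_singleton s sum_distrib_left)
  finally show ?thesis .
qed simp

lemma exp_gl_exp_leaf_part:
  "(\<Sum>n\<le>size H. (of_nat (size H) - of_nat n) * pow_gl_exp x y n H / fact n)
     = (\<Sum>t\<in>set_mset H. single (leaf y) t * (exp_gl_exp x y (H - {#t#}) :: 'k::field_char_0))"
proof (cases "leaf y \<in># H")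
  case True
  then obtain s where s: "size H = Suc s" and s': "size (H - {#leaf y#}) = s"
    by (metis nonempty_has_size gr0_implies_Suc empty_iff set_mset_empty size_Diff_singleton diff_Suc_1)
  have "(\<Sum>n\<le>size H. (of_nat (size H) - of_nat n) * pow_gl_exp x y n H / fact n)
      = (\<Sum>n\<le>Suc s. pow_gl_exp x y n (H - {#leaf y#}) / fact n :: 'k)"
    unfolding pow_gl_exp_leaf_recurrence s[symmetric] using True by simp
  also have "\<dots> = exp_gl_exp x y (H - {#leaf y#})"
    by (simp add: exp_gl_exp_def s' pow_gl_exp_eq_0)
  finally show ?thesis
    using True by (simp add: sum_single_mult)
qed (simp_all add: pow_gl_exp_leaf_recurrence sum_single_mult)

lemma exp_gl_exp_recurrence:
  "of_nat (size H) * exp_gl_exp x y H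
     = (\<Sum>t\<in>set_mset H. (single (leaf y) t + corolla_coeff x y t) * (exp_gl_exp x y (H - {#t#}) :: 'k::field_char_0))"
proof -
  have "of_nat (size H) * exp_gl_exp x y H
      = (\<Sum>n\<le>size H. of_nat n * pow_gl_exp x y n H / fact n
          + (of_nat (size H) - of_nat n) * pow_gl_exp x y n H / fact n :: 'k)"
    unfolding exp_gl_exp_def sum_distrib_left by (rule sum.cong) (simp_all add: field_simps)
  also have "\<dots> = (\<Sum>t\<in>set_mset H. corolla_coeff x y t * exp_gl_exp x y (H - {#t#}))
      + (\<Sum>t\<in>set_mset H. single (leaf y) t * exp_gl_exp x y (H - {#t#}))"
    unfolding sum.distrib exp_gl_exp_corolla_part exp_gl_exp_leaf_part ..
  also have "\<dots> = (\<Sum>t\<in>set_mset H. (single (leaf y) t + corolla_coeff x y t) * exp_gl_exp x y (H - {#t#}))"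
    by (simp add: distrib_right sum.distrib)
  finally show ?thesis .
qed

lemma exp_gl_exp_eq_exp_coeff:
  "exp_gl_exp x y = (exp_coeff (\<lambda>u. single (leaf y) u + corolla_coeff x y u) :: _ \<Rightarrow> 'k::field_char_0)"
proof
  fix H
  show "exp_gl_exp x y H = (exp_coeff (\<lambda>u. single (leaf y) u + corolla_coeff x y u) H :: 'k)"
  proof (rule exp_coeff_unique)
    show "exp_gl_exp x y {#} = (1 :: 'k)"
      by (simp add: exp_gl_exp_def pow_gl_exp_0)
  qed (rule exp_gl_exp_recurrence)
qed

theorem proposition6p1:
  fixes x y :: 'd
  shows "gl (fexp (tree_emb (single (leaf x))) :: ('d, 'k::field_char_0) fcomb)
            (fexp (tree_emb (single (leaf y))))
         = fexp (tree_emb (\<lambda>u. single (leaf y) u + act_lin (leaf x) (fexp (tree_emb (single (leaf y)))) u))"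
proof -
  have "gl (exp_coeff (single (leaf x))) (exp_coeff (single (leaf y))) = (exp_gl_exp x y :: _ \<Rightarrow> 'k)"
    by (rule ext) (rule gl_exp_leaves)
  also have "\<dots> = exp_coeff (\<lambda>u. single (leaf y) u + corolla_coeff x y u)"
    by (rule exp_gl_exp_eq_exp_coeff)
  finally show ?thesis
    unfolding fexp_tree_emb act_lin_leaf_exp_leaf .
qed

end
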